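(* Let $n,p\in\mathbb{N}$ with $p\ge1$ and $n\ge p+1$, and let $\bm\alpha=(\alpha_0,\dots,\alpha_p)\in\mathbb{R}^{p+1}$. For $j=1,\dots,n$ let $\bm u_j$ have components $u_{i,j}=\sqrt{\tfrac{4}{2n+1}}\sin\!\big(\tfrac{i(2j-1)\pi}{2n+1}\big)$, $i=1,\dots,n$. Then $\big(T_n^{\bm\alpha}+H_n^{\bm\alpha,2,1}\big)\bm u_j=\lambda_j\bm u_j$ with $\lambda_j=g_p^{\bm\alpha}\big(\tfrac{(2j-1)\pi}{2n+1}\big)$, and these are all the eigenvalues of $T_n^{\bm\alpha}+H_n^{\bm\alpha,2,1}$.
   Context: Convention $\alpha_k=0$ for $k>p$. $T_n^{\bm\alpha}$ is the $n\times n$ symmetric banded Toeplitz matrix with $(T_n^{\bm\alpha})_{i,j}=\alpha_{|i-j|}$. $H_n^{\bm\alpha,2,1}$ is the $n\times n$ matrix with $(H_n^{\bm\alpha,2,1})_{i,j}=-\alpha_{i+j}+\alpha_{2n+1-i-j}$ (so its top-left corner is $-\alpha_2,-\alpha_3,\dots$ on successive antidiagonals and its bottom-right corner is $\alpha_1,\alpha_2,\dots$). $g_p^{\bm\alpha}(\theta)=\alpha_0+2\sum_{k=1}^p\alpha_k\cos(k\theta)$. *)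

theory Defs
  imports "Jordan_Normal_Form.Matrix" "Jordan_Normal_Form.Char_Poly"
begin

definition alpha_ext :: "nat \<Rightarrow> (nat \<Rightarrow> real) \<Rightarrow> nat \<Rightarrow> real" where
  "alpha_ext p \<alpha> k = (if k \<le> p then \<alpha> k else 0)"

(* T_n^alpha; JNF matrices are 0-indexed, entry (i,j) here is entry (i+1,j+1) of the paper *)
definition toep :: "nat \<Rightarrow> nat \<Rightarrow> (nat \<Rightarrow> real) \<Rightarrow> real mat" where
  "toep n p \<alpha> = mat n n (\<lambda>(i,j). alpha_ext p \<alpha> (if j \<le> i then i - j else j - i))"

(* H_n^{alpha,2,1}: paper entry (i',j') = -alpha_{i'+j'} + alpha_{2n+1-i'-j'} with i'=i+1, j'=j+1 *)
definition hank :: "nat \<Rightarrow> nat \<Rightarrow> (nat \<Rightarrow> real) \<Rightarrow> real mat" where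
  "hank n p \<alpha> = mat n n (\<lambda>(i,j). - alpha_ext p \<alpha> ((i+1) + (j+1))
                                    + alpha_ext p \<alpha> (2*n + 1 - (i+1) - (j+1)))"

definition symbol_g :: "nat \<Rightarrow> (nat \<Rightarrow> real) \<Rightarrow> real \<Rightarrow> real" where
  "symbol_g p \<alpha> \<theta> = \<alpha> 0 + 2 * (\<Sum>k=1..p. \<alpha> k * cos (real k * \<theta>))"

(* eigenvector u_j (j = 1..n); component index i (0-based) corresponds to paper index i+1 *)
definition u_vec :: "nat \<Rightarrow> nat \<Rightarrow> real vec" where
  "u_vec n j = vec n (\<lambda>i. sqrt (4 / (2 * real n + 1)) *
       sin (real (i+1) * (2 * real j - 1) * pi / (2 * real n + 1)))"

end

theory Submission
  imports Defs
begin

(* With theta_j = (2j-1) pi / (2n+1) and s(c) = sin (c theta_j), the sequence s is odd and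
   satisfies s(2n+1-c) = s(c).  The two Hankel corrections in row i of T + H are exactly the
   Toeplitz convolution of alpha with s read through these two reflections, so the whole row is
   the convolution  sum_{|k|<=p} alpha_|k| s(i-k) = g(theta_j) s(i)  of the infinite Toeplitz
   operator, the last step by sin(x-y) + sin(x+y) = 2 cos y sin x.  The eigenvectors u_j are
   mutually orthogonal (already for the case alpha = (0,1), where the eigenvalues 2 cos theta_j
   are distinct), hence span R^n, so T + H has no other eigenvalues. *)

lemma symmetric_eigenvectors_scalar_prod:
  fixes A :: "'a :: comm_ring_1 mat"
  assumes A: "A \<in> carrier_mat n n" and sym: "transpose_mat A = A"
    and u: "u \<in> carrier_vec n" and v: "v \<in> carrier_vec n"
    and "A *\<^sub>v u = \<mu> \<cdot>\<^sub>v u" and "A *\<^sub>v v = \<nu> \<cdot>\<^sub>v v"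
  shows "\<mu> * (u \<bullet> v) = \<nu> * (u \<bullet> v)"
proof -
  have "(A *\<^sub>v u) \<bullet> v = u \<bullet> (A *\<^sub>v v)"
    using transpose_vec_mult_scalar[OF A v u] sym by simp
  then show ?thesis
    using assms by (simp add: smult_scalar_prod_distrib scalar_prod_smult_distrib)
qed

lemma orthogonal_family_vec_eq_0:
  fixes f :: "nat \<Rightarrow> 'a :: field vec"
  assumes f: "\<And>j. j < n \<Longrightarrow> f j \<in> carrier_vec n"
    and f_self: "\<And>j. j < n \<Longrightarrow> f j \<bullet> f j \<noteq> 0"
    and f_orth: "\<And>j k. j < n \<Longrightarrow> k < n \<Longrightarrow> j \<noteq> k \<Longrightarrow> f j \<bullet> f k = 0"
    and v: "v \<in> carrier_vec n" and v_orth: "\<And>j. j < n \<Longrightarrow> f j \<bullet> v = 0"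
  shows "v = 0\<^sub>v n"
proof -
  define W where "W = mat n n (\<lambda>(j, i). f j $ i)"
  have W: "W \<in> carrier_mat n n" by (simp add: W_def)
  have row_W: "row W j = f j" if "j < n" for j
    using that f[OF that] by (auto simp: W_def)
  define D where "D = W * transpose_mat W"
  have D: "D \<in> carrier_mat n n" using W by (simp add: D_def)
  have D_index: "D $$ (j, k) = f j \<bullet> f k" if "j < n" "k < n" for j k
    using that W by (simp add: D_def row_W)
  have "upper_triangular D"
    using D by (auto simp: upper_triangular_def D_index f_orth)
  then have "det D = prod_list (diag_mat D)" using D by (rule det_upper_triangular)
  moreover have "0 \<notin> set (diag_mat D)"
    using D f_self by (auto simp: diag_mat_def D_index)
  ultimately have "det D \<noteq> 0" by (simp add: prod_list_zero_iff)
  moreover have "det D = det W * det W"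
    unfolding D_def using W by (simp add: det_mult det_transpose)
  ultimately have "det W \<noteq> 0" by simp
  moreover have "W *\<^sub>v v = 0\<^sub>v n"
    using W by (intro eq_vecI) (auto simp: row_W v_orth)
  ultimately show ?thesis
    using det_0_iff_vec_prod_zero_field[OF W] v by blast
qed

lemma eigenvalue_iff_of_orthogonal_eigenvectors:
  fixes A :: "'a :: field mat"
  assumes A: "A \<in> carrier_mat n n" and sym: "transpose_mat A = A"
    and f: "\<And>j. j < n \<Longrightarrow> f j \<in> carrier_vec n"
    and f_self: "\<And>j. j < n \<Longrightarrow> f j \<bullet> f j \<noteq> 0"
    and f_orth: "\<And>j k. j < n \<Longrightarrow> k < n \<Longrightarrow> j \<noteq> k \<Longrightarrow> f j \<bullet> f k = 0"
    and f_eigen: "\<And>j. j < n \<Longrightarrow> A *\<^sub>v f j = \<mu> j \<cdot>\<^sub>v f j"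
  shows "eigenvalue A e \<longleftrightarrow> (\<exists>j<n. e = \<mu> j)"
proof
  assume "eigenvalue A e"
  then obtain v where v: "v \<in> carrier_vec n" "v \<noteq> 0\<^sub>v n" "A *\<^sub>v v = e \<cdot>\<^sub>v v"
    using that A unfolding eigenvalue_def eigenvector_def by (metis carrier_matD(1))
  show "\<exists>j<n. e = \<mu> j"
  proof (rule ccontr)
    assume no_j: "\<not> (\<exists>j<n. e = \<mu> j)"
    have v_orth: "f j \<bullet> v = 0" if "j < n" for j
    proof -
      have "\<mu> j * (f j \<bullet> v) = e * (f j \<bullet> v)"
        by (rule symmetric_eigenvectors_scalar_prod[OF A sym f[OF that] v(1) f_eigen[OF that] v(3)])
      moreover have "\<mu> j \<noteq> e" using no_j that by blast
      ultimately show ?thesis by simp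
    qed
    have "v = 0\<^sub>v n"
      using f f_self f_orth v(1) v_orth by (rule orthogonal_family_vec_eq_0)
    with v(2) show False ..
  qed
next
  assume "\<exists>j<n. e = \<mu> j"
  then obtain j where j: "j < n" and e: "e = \<mu> j" by blast
  have "f j \<noteq> 0\<^sub>v n"
  proof
    assume "f j = 0\<^sub>v n"
    then have "f j \<bullet> f j = 0" by simp
    with f_self[OF j] show False ..
  qed
  then have "eigenvector A (f j) e"
    using A f[OF j] f_eigen[OF j] unfolding eigenvector_def e by simp
  then show "eigenvalue A e"
    unfolding eigenvalue_def by blast
qed

lemma sum_int_symmetric_interval:
  fixes h :: "int \<Rightarrow> 'a :: comm_monoid_add"
  shows "(\<Sum>k\<in>{-int p..int p}. h k) = h 0 + (\<Sum>k=1..p. h (int k) + h (- int k))"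
proof (induction p)
  case 0
  then show ?case by simp
next
  case (Suc p)
  have "{-int (Suc p)..int (Suc p)} = insert (int p + 1) (insert (- int (Suc p)) {-int p..int p})"
    by auto
  then show ?case using Suc by (simp add: ac_simps)
qed

lemma toeplitz_hankel_row_fold:
  fixes s a :: "int \<Rightarrow> real" and n p i :: nat
  assumes "p + 1 \<le> n" and "i < n"
    and a_even: "\<And>k. a (- k) = a k" and "\<And>k. int p < \<bar>k\<bar> \<Longrightarrow> a k = 0"
    and s_odd: "\<And>c. s (- c) = - s c" and s_reflect: "\<And>c. s (2 * int n + 1 - c) = s c"
  shows "(\<Sum>c<n. (a (int i - int c) - a (int i + int c + 2) + a (2 * int n - 1 - int i - int c))
                  * s (int c + 1))
       = (\<Sum>k\<in>{-int p..int p}. a k * s (int i + 1 - k))"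
proof -
  define F where "F c = a (int i + 1 - c) * s c" for c
  have "s 0 = 0" using s_odd[of 0] by simp
  then have F0: "F 0 = 0" by (simp add: F_def)
  have "(\<Sum>c<n. (a (int i - int c) - a (int i + int c + 2) + a (2 * int n - 1 - int i - int c))
                  * s (int c + 1))
      = (\<Sum>c<n. F (int c + 1) + F (- int c - 1) + F (2 * int n - int c))"
  proof (rule sum.cong[OF refl])
    fix c
    have "s (- int c - 1) = - s (int c + 1)"
      using s_odd[of "int c + 1"] by (simp only: minus_add_distrib diff_conv_add_uminus)
    then have "F (- int c - 1) = - a (int i + int c + 2) * s (int c + 1)"
      by (simp add: F_def algebra_simps)
    moreover have "F (2 * int n - int c) = a (2 * int n - 1 - int i - int c) * s (int c + 1)"
    proof -
      have "a (int i + 1 - (2 * int n - int c)) = a (2 * int n - 1 - int i - int c)"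
        using a_even[of "2 * int n - 1 - int i - int c"] by (simp add: algebra_simps)
      moreover have "s (2 * int n - int c) = s (int c + 1)"
        using s_reflect[of "int c + 1"] by (simp add: algebra_simps)
      ultimately show ?thesis by (simp add: F_def)
    qed
    ultimately show "(a (int i - int c) - a (int i + int c + 2) + a (2 * int n - 1 - int i - int c))
                     * s (int c + 1) = F (int c + 1) + F (- int c - 1) + F (2 * int n - int c)"
      by (simp add: F_def algebra_simps)
  qed
  also have "\<dots> = (\<Sum>c\<in>{1..int n}. F c) + (\<Sum>c\<in>{-int n..-1}. F c)
                 + (\<Sum>c\<in>{int n + 1..2 * int n}. F c)"
  proof -
    have "(\<Sum>c<n. F (int c + 1)) = (\<Sum>c\<in>{1..int n}. F c)"
      by (rule sum.reindex_bij_witness[of _ "\<lambda>c. nat (c - 1)" "\<lambda>c. int c + 1"]) auto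
    moreover have "(\<Sum>c<n. F (- int c - 1)) = (\<Sum>c\<in>{-int n..-1}. F c)"
      by (rule sum.reindex_bij_witness[of _ "\<lambda>c. nat (- c - 1)" "\<lambda>c. - int c - 1"]) auto
    moreover have "(\<Sum>c<n. F (2 * int n - int c)) = (\<Sum>c\<in>{int n + 1..2 * int n}. F c)"
      by (rule sum.reindex_bij_witness[of _ "\<lambda>c. nat (2 * int n - c)" "\<lambda>c. 2 * int n - int c"]) auto
    ultimately show ?thesis by (simp add: sum.distrib)
  qed
  also have "\<dots> = (\<Sum>c\<in>{-int n..-1} \<union> ({0} \<union> ({1..int n} \<union> {int n + 1..2 * int n})). F c)"
    by (subst sum.union_disjoint, simp, simp, force)+ (simp add: F0)
  also have "{-int n..-1} \<union> ({0} \<union> ({1..int n} \<union> {int n + 1..2 * int n})) = {-int n..2 * int n}"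
    by auto
  also have "(\<Sum>c\<in>{-int n..2 * int n}. F c) = (\<Sum>c\<in>{int i + 1 - int p..int i + 1 + int p}. F c)"
    by (rule sum.mono_neutral_right) (use assms in \<open>auto simp: F_def\<close>)
  also have "\<dots> = (\<Sum>k\<in>{-int p..int p}. a k * s (int i + 1 - k))"
    by (rule sum.reindex_bij_witness[of _ "\<lambda>k. int i + 1 - k" "\<lambda>c. int i + 1 - c"]) (auto simp: F_def)
  finally show ?thesis .
qed

definition grid_angle :: "nat \<Rightarrow> nat \<Rightarrow> real" where
  "grid_angle n j = (2 * real j - 1) * pi / (2 * real n + 1)"

lemma grid_angle_bounds:
  assumes "j \<in> {1..n}"
  shows "0 < grid_angle n j" "grid_angle n j < pi"
proof -
  have h: "0 < 2 * real j - 1" "2 * real j - 1 < 2 * real n + 1" using assms by auto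
  then show "0 < grid_angle n j" by (simp add: grid_angle_def)
  have "(2 * real j - 1) * pi < (2 * real n + 1) * pi" using h by simp
  then show "grid_angle n j < pi" by (simp add: grid_angle_def pos_divide_less_eq)
qed

lemma grid_angle_inj:
  assumes "j \<in> {1..n}" "k \<in> {1..n}" "grid_angle n j = grid_angle n k"
  shows "j = k"
  using assms by (simp add: grid_angle_def field_simps)

lemma sin_grid_angle_reflect:
  assumes "j \<ge> 1"
  shows "sin (of_int (2 * int n + 1 - c) * grid_angle n j) = sin (of_int c * grid_angle n j)"
proof -
  obtain m where m: "j = Suc m" using assms by (cases j) auto
  have "of_int (2 * int n + 1 - c) * grid_angle n j = real (2 * m + 1) * pi - of_int c * grid_angle n j"
    unfolding grid_angle_def m by (simp add: field_simps)
  moreover have "sin (real (2 * m + 1) * pi - x) = sin x" for x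
    by (simp only: sin_diff sin_npi cos_npi) simp
  ultimately show ?thesis by simp
qed

definition alpha_sym :: "nat \<Rightarrow> (nat \<Rightarrow> real) \<Rightarrow> int \<Rightarrow> real" where
  "alpha_sym p \<alpha> k = alpha_ext p \<alpha> (nat \<bar>k\<bar>)"

lemma alpha_sym_uminus [simp]: "alpha_sym p \<alpha> (- k) = alpha_sym p \<alpha> k"
  by (simp add: alpha_sym_def)

lemma alpha_sym_eq_0: "int p < \<bar>k\<bar> \<Longrightarrow> alpha_sym p \<alpha> k = 0"
  by (simp add: alpha_sym_def alpha_ext_def)

lemma alpha_sym_sin_convolution:
  "(\<Sum>k\<in>{-int p..int p}. alpha_sym p \<alpha> k * sin (of_int (r - k) * \<theta>))
     = symbol_g p \<alpha> \<theta> * sin (of_int r * \<theta>)"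
proof -
  have pair: "alpha_sym p \<alpha> (int k) * sin (of_int (r - int k) * \<theta>)
              + alpha_sym p \<alpha> (- int k) * sin (of_int (r + int k) * \<theta>)
            = 2 * \<alpha> k * cos (real k * \<theta>) * sin (of_int r * \<theta>)" if "k \<in> {1..p}" for k
  proof -
    have "alpha_sym p \<alpha> (int k) = \<alpha> k" using that by (simp add: alpha_sym_def alpha_ext_def)
    then have "alpha_sym p \<alpha> (int k) * sin (of_int (r - int k) * \<theta>)
              + alpha_sym p \<alpha> (- int k) * sin (of_int (r + int k) * \<theta>)
             = \<alpha> k * (sin (of_int (r - int k) * \<theta>) + sin (of_int (r + int k) * \<theta>))"
      by (simp add: distrib_left)
    also have "sin (of_int (r - int k) * \<theta>) + sin (of_int (r + int k) * \<theta>)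
             = 2 * cos (real k * \<theta>) * sin (of_int r * \<theta>)"
      by (simp add: sin_diff sin_add algebra_simps)
    finally show ?thesis by simp
  qed
  have "(\<Sum>k\<in>{-int p..int p}. alpha_sym p \<alpha> k * sin (of_int (r - k) * \<theta>))
      = alpha_sym p \<alpha> 0 * sin (of_int r * \<theta>)
        + (\<Sum>k=1..p. alpha_sym p \<alpha> (int k) * sin (of_int (r - int k) * \<theta>)
                      + alpha_sym p \<alpha> (- int k) * sin (of_int (r + int k) * \<theta>))"
    by (simp add: sum_int_symmetric_interval)
  also have "\<dots> = \<alpha> 0 * sin (of_int r * \<theta>)
                 + (\<Sum>k=1..p. 2 * \<alpha> k * cos (real k * \<theta>) * sin (of_int r * \<theta>))"
    by (simp only: sum.cong[OF refl pair]) (simp add: alpha_sym_def alpha_ext_def)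
  also have "\<dots> = symbol_g p \<alpha> \<theta> * sin (of_int r * \<theta>)"
    by (simp add: symbol_g_def algebra_simps sum_distrib_left sum_distrib_right)
  finally show ?thesis .
qed

lemma dim_toep [simp]: "dim_row (toep n p \<alpha>) = n" "dim_col (toep n p \<alpha>) = n"
  and dim_hank [simp]: "dim_row (hank n p \<alpha>) = n" "dim_col (hank n p \<alpha>) = n"
  by (simp_all add: toep_def hank_def)

lemma toep_hank_symmetric: "transpose_mat (toep n p \<alpha> + hank n p \<alpha>) = toep n p \<alpha> + hank n p \<alpha>"
  by (rule eq_matI) (auto simp: toep_def hank_def add.commute)

lemma toep_hank_carrier: "toep n p \<alpha> + hank n p \<alpha> \<in> carrier_mat n n"
  by (simp add: toep_def hank_def)

lemma toep_hank_index:
  assumes "i < n" "c < n"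
  shows "(toep n p \<alpha> + hank n p \<alpha>) $$ (i, c)
       = alpha_sym p \<alpha> (int i - int c) - alpha_sym p \<alpha> (int i + int c + 2)
         + alpha_sym p \<alpha> (2 * int n - 1 - int i - int c)"
proof -
  have "nat \<bar>int i - int c\<bar> = (if c \<le> i then i - c else c - i)"
    "nat \<bar>int i + int c + 2\<bar> = i + 1 + (c + 1)"
    "nat \<bar>2 * int n - 1 - int i - int c\<bar> = 2 * n + 1 - (i + 1) - (c + 1)"
    using assms by auto
  then show ?thesis using assms by (simp add: toep_def hank_def alpha_sym_def)
qed

lemma u_vec_carrier: "u_vec n j \<in> carrier_vec n"
  by (simp add: u_vec_def)

lemma u_vec_index:
  "c < n \<Longrightarrow> u_vec n j $ c = sqrt (4 / (2 * real n + 1)) * sin (of_int (int c + 1) * grid_angle n j)"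
  by (simp add: u_vec_def grid_angle_def field_simps)

lemma dim_u_vec [simp]: "dim_vec (u_vec n j) = n"
  by (simp add: u_vec_def)

lemma toep_hank_mult_u_vec:
  assumes "p + 1 \<le> n" and j: "j \<in> {1..n}"
  shows "(toep n p \<alpha> + hank n p \<alpha>) *\<^sub>v u_vec n j
       = symbol_g p \<alpha> (grid_angle n j) \<cdot>\<^sub>v u_vec n j"
proof (rule eq_vecI)
  let ?M = "toep n p \<alpha> + hank n p \<alpha>"
  define s where "s c = sin (of_int c * grid_angle n j)" for c :: int
  define K where "K = sqrt (4 / (2 * real n + 1))"
  fix i assume "i < dim_vec (symbol_g p \<alpha> (grid_angle n j) \<cdot>\<^sub>v u_vec n j)"
  then have i: "i < n" by simp
  have "(?M *\<^sub>v u_vec n j) $ i = (\<Sum>c<n. ?M $$ (i, c) * u_vec n j $ c)"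
    using i by (simp add: scalar_prod_def atLeast0LessThan)
  also have "\<dots> = K * (\<Sum>c<n. (alpha_sym p \<alpha> (int i - int c) - alpha_sym p \<alpha> (int i + int c + 2)
                          + alpha_sym p \<alpha> (2 * int n - 1 - int i - int c)) * s (int c + 1))"
  proof -
    have "?M $$ (i, c) * u_vec n j $ c
          = K * ((alpha_sym p \<alpha> (int i - int c) - alpha_sym p \<alpha> (int i + int c + 2)
                  + alpha_sym p \<alpha> (2 * int n - 1 - int i - int c)) * s (int c + 1))" if "c < n" for c
      unfolding toep_hank_index[OF i that] u_vec_index[OF that] s_def K_def by simp
    then show ?thesis by (simp add: sum_distrib_left)
  qed
  also have "\<dots> = K * (\<Sum>k\<in>{-int p..int p}. alpha_sym p \<alpha> k * s (int i + 1 - k))"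
  proof -
    have s_odd: "s (- c) = - s c" for c
      by (simp add: s_def)
    have s_reflect: "s (2 * int n + 1 - c) = s c" for c
      using j unfolding s_def by (intro sin_grid_angle_reflect) simp
    show ?thesis
      using toeplitz_hankel_row_fold[where a = "alpha_sym p \<alpha>", OF assms(1) i _ _ s_odd s_reflect]
      by (simp add: alpha_sym_eq_0)
  qed
  also have "\<dots> = symbol_g p \<alpha> (grid_angle n j) * u_vec n j $ i"
    unfolding s_def alpha_sym_sin_convolution using i by (simp add: K_def u_vec_index)
  finally show "(?M *\<^sub>v u_vec n j) $ i = (symbol_g p \<alpha> (grid_angle n j) \<cdot>\<^sub>v u_vec n j) $ i"
    using i by simp
qed simp

lemma u_vec_self_scalar_prod_pos:
  assumes "j \<in> {1..n}"
  shows "u_vec n j \<bullet> u_vec n j > 0"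
proof -
  have n: "0 < n" using assms by simp
  have "u_vec n j $ 0 > 0"
    using n grid_angle_bounds[OF assms] by (simp add: u_vec_index sin_gt_zero)
  then have "0 < u_vec n j $ 0 * u_vec n j $ 0" by simp
  also have "\<dots> \<le> (\<Sum>i\<in>{0..<n}. u_vec n j $ i * u_vec n j $ i)"
    using n by (intro member_le_sum) auto
  finally show ?thesis by (simp add: scalar_prod_def)
qed

lemma u_vec_orthogonal:
  assumes j: "j \<in> {1..n}" and k: "k \<in> {1..n}" and "j \<noteq> k"
  shows "u_vec n j \<bullet> u_vec n k = 0"
proof -
  \<comment> \<open>For \<open>\<alpha> = (0, 1)\<close> the eigenvalues \<open>2 cos \<theta>\<^sub>j\<close> are pairwise distinct.\<close>
  define e1 where "e1 = (\<lambda>i::nat. if i = 1 then 1 else 0 :: real)"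
  have "2 \<le> n" using assms by auto
  then have eigen: "(toep n 1 e1 + hank n 1 e1) *\<^sub>v u_vec n i = (2 * cos (grid_angle n i)) \<cdot>\<^sub>v u_vec n i"
    if "i \<in> {1..n}" for i
    using toep_hank_mult_u_vec[OF _ that] by (simp add: symbol_g_def e1_def)
  have "cos (grid_angle n j) \<noteq> cos (grid_angle n k)"
    using grid_angle_bounds[OF j] grid_angle_bounds[OF k] grid_angle_inj[OF j k] \<open>j \<noteq> k\<close>
      cos_inj_pi by force
  moreover have "2 * cos (grid_angle n j) * (u_vec n j \<bullet> u_vec n k)
               = 2 * cos (grid_angle n k) * (u_vec n j \<bullet> u_vec n k)"
    by (rule symmetric_eigenvectors_scalar_prod[OF toep_hank_carrier toep_hank_symmetric
          u_vec_carrier u_vec_carrier eigen[OF j] eigen[OF k]])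
  ultimately show ?thesis by simp
qed

theorem mainTheorem9:
  fixes n p :: nat and \<alpha> :: "nat \<Rightarrow> real"
  assumes "p \<ge> 1" and "n \<ge> p + 1"
  shows "(\<forall>j\<in>{1..n}. (toep n p \<alpha> + hank n p \<alpha>) *\<^sub>v u_vec n j
            = symbol_g p \<alpha> ((2 * real j - 1) * pi / (2 * real n + 1)) \<cdot>\<^sub>v u_vec n j)
       \<and> {ev. eigenvalue (toep n p \<alpha> + hank n p \<alpha>) ev}
           = {symbol_g p \<alpha> ((2 * real j - 1) * pi / (2 * real n + 1)) | j. j \<in> {1..n}}"
proof -
  let ?M = "toep n p \<alpha> + hank n p \<alpha>" and ?g = "\<lambda>j. symbol_g p \<alpha> (grid_angle n j)"
  have eigen: "?M *\<^sub>v u_vec n j = ?g j \<cdot>\<^sub>v u_vec n j" if "j \<in> {1..n}" for j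
    using toep_hank_mult_u_vec[OF assms(2) that] .
  have "eigenvalue ?M e \<longleftrightarrow> (\<exists>j<n. e = ?g (Suc j))" for e
  proof (rule eigenvalue_iff_of_orthogonal_eigenvectors[where f = "\<lambda>j. u_vec n (Suc j)"])
    show "u_vec n (Suc j) \<bullet> u_vec n (Suc j) \<noteq> 0" if "j < n" for j
      using u_vec_self_scalar_prod_pos[of "Suc j" n] that by simp
    show "u_vec n (Suc j) \<bullet> u_vec n (Suc k) = 0" if "j < n" "k < n" "j \<noteq> k" for j k
      using that by (intro u_vec_orthogonal) auto
    show "?M *\<^sub>v u_vec n (Suc j) = ?g (Suc j) \<cdot>\<^sub>v u_vec n (Suc j)" if "j < n" for j
      using that by (intro eigen) auto
  qed (simp_all add: toep_hank_carrier toep_hank_symmetric u_vec_carrier)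
  then have "{e. eigenvalue ?M e} = ?g ` Suc ` {..<n}"
    by blast
  also have "\<dots> = {?g j | j. j \<in> {1..n}}"
    by (auto simp: image_Suc_lessThan)
  finally show ?thesis
    using eigen unfolding grid_angle_def by blast
qed

end
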